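(* Let $n_1,n_2\ge3$. The graphs $\overline{L(K_{2,n_1})}$ and $\overline{L(K_{2,n_2})}$ are $\mathcal{C}$-$\mathrm{HH}$-symmetric if and only if they are isomorphic (i.e. $n_1=n_2$).
   Context: $\overline{L(K_{2,n})}$ (bipartite complement of a perfect matching) is the bipartite graph with parts $\{x_1,\dots,x_n\}$, $\{y_1,\dots,y_n\}$ and $x_i\sim y_j$ iff $i\ne j$. Subgraphs are induced; a homomorphism maps edges to edges. $G_1$ is $\mathcal{C}$-$\mathrm{HH}$-morphic to $G_2$ if every homomorphism from a finite connected induced subgraph $A$ of $G_1$ onto an induced subgraph $B$ of $G_2$ extends to a homomorphism $G_1\to G_2$; $G_1,G_2$ are $\mathcal{C}$-$\mathrm{HH}$-symmetric if each is $\mathcal{C}$-$\mathrm{HH}$-morphic to the other. *)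

theory Defs
  imports Main
begin

text \<open>A graph is given by a vertex set V and a symmetric irreflexive adjacency
relation E (only its restriction to V matters).\<close>

text \<open>The bipartite complement of a perfect matching, on vertices
x_i = (False, i), y_i = (True, i) for i < n; x_i ~ y_j iff i \<noteq> j.\<close>
definition bcpm_V :: "nat \<Rightarrow> (bool \<times> nat) set" where
  "bcpm_V n = {(b, i). i < n}"

definition bcpm_E :: "(bool \<times> nat) \<Rightarrow> (bool \<times> nat) \<Rightarrow> bool" where
  "bcpm_E u v \<longleftrightarrow> fst u \<noteq> fst v \<and> snd u \<noteq> snd v"

definition is_hom :: "'a set \<Rightarrow> ('a \<Rightarrow> 'a \<Rightarrow> bool) \<Rightarrow> 'b set \<Rightarrow> ('b \<Rightarrow> 'b \<Rightarrow> bool) \<Rightarrow> ('a \<Rightarrow> 'b) \<Rightarrow> bool" where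
  "is_hom A E1 B E2 f \<longleftrightarrow> f ` A \<subseteq> B \<and> (\<forall>x\<in>A. \<forall>y\<in>A. E1 x y \<longrightarrow> E2 (f x) (f y))"

definition connected_on :: "('a \<Rightarrow> 'a \<Rightarrow> bool) \<Rightarrow> 'a set \<Rightarrow> bool" where
  "connected_on E A \<longleftrightarrow> A \<noteq> {} \<and>
     (\<forall>x\<in>A. \<forall>y\<in>A. (\<lambda>u v. u \<in> A \<and> v \<in> A \<and> E u v)\<^sup>*\<^sup>* x y)"

definition C_HH_morphic :: "'a set \<Rightarrow> ('a \<Rightarrow> 'a \<Rightarrow> bool) \<Rightarrow> 'b set \<Rightarrow> ('b \<Rightarrow> 'b \<Rightarrow> bool) \<Rightarrow> bool" where
  "C_HH_morphic V1 E1 V2 E2 \<longleftrightarrow>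
     (\<forall>A B f. A \<subseteq> V1 \<and> finite A \<and> connected_on E1 A \<and> B \<subseteq> V2 \<and>
        is_hom A E1 B E2 f \<and> f ` A = B \<longrightarrow>
        (\<exists>g. is_hom V1 E1 V2 E2 g \<and> (\<forall>x\<in>A. g x = f x)))"

definition C_HH_symmetric :: "'a set \<Rightarrow> ('a \<Rightarrow> 'a \<Rightarrow> bool) \<Rightarrow> 'b set \<Rightarrow> ('b \<Rightarrow> 'b \<Rightarrow> bool) \<Rightarrow> bool" where
  "C_HH_symmetric V1 E1 V2 E2 \<longleftrightarrow> C_HH_morphic V1 E1 V2 E2 \<and> C_HH_morphic V2 E2 V1 E1"

definition graph_iso :: "'a set \<Rightarrow> ('a \<Rightarrow> 'a \<Rightarrow> bool) \<Rightarrow> 'b set \<Rightarrow> ('b \<Rightarrow> 'b \<Rightarrow> bool) \<Rightarrow> bool" where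
  "graph_iso V1 E1 V2 E2 \<longleftrightarrow>
     (\<exists>h. bij_betw h V1 V2 \<and> (\<forall>x\<in>V1. \<forall>y\<in>V1. E1 x y \<longleftrightarrow> E2 (h x) (h y)))"

end

theory Submission
  imports Defs
begin

text \<open>A homomorphism f from a connected subgraph either keeps every vertex on its side of
the bipartition or swaps every vertex to the other side.  Such a side-respecting partial map
extends greedily one vertex at a time: a new vertex v has fewer than n neighbours, so some index
c < n is not used by their images, and sending v to index c on the appropriate side keeps all
edges.  Hence the graph is C-HH-morphic to itself.  Conversely, for m < n the identity on the
copy of the m-graph inside the n-graph cannot extend: if x_m is sent to a vertex of index j < m,
then x_m is adjacent to the fixed vertex y_j, whereas its image shares the index j with y_j.\<close>

lemma bcpm_E_sym: "bcpm_E u v \<Longrightarrow> bcpm_E v u"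
  by (auto simp: bcpm_E_def)

lemma bcpm_V_eq: "bcpm_V n = UNIV \<times> {..<n}"
  by (auto simp: bcpm_V_def)

lemma finite_bcpm_V: "finite (bcpm_V n)"
  by (simp add: bcpm_V_eq)

lemma card_bcpm_V: "card (bcpm_V n) = 2 * n"
  by (simp add: bcpm_V_eq card_cartesian_product)

lemma bcpm_V_mono: "m \<le> n \<Longrightarrow> bcpm_V m \<subseteq> bcpm_V n"
  by (auto simp: bcpm_V_def)

lemma card_bcpm_neighbours_less:
  assumes "v \<in> bcpm_V n"
  shows "card {w \<in> bcpm_V n. bcpm_E v w} < n"
proof -
  have "{w \<in> bcpm_V n. bcpm_E v w} = {\<not> fst v} \<times> ({..<n} - {snd v})"
    by (auto simp: bcpm_V_def bcpm_E_def)
  moreover have "snd v < n" using assms by (auto simp: bcpm_V_def)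
  ultimately show ?thesis
    by (simp add: card_cartesian_product card_Diff_singleton)
qed

definition sided_hom :: "nat \<Rightarrow> bool \<Rightarrow> (bool \<times> nat) set \<Rightarrow> (bool \<times> nat \<Rightarrow> bool \<times> nat) \<Rightarrow> bool" where
  "sided_hom n s A f \<longleftrightarrow> A \<subseteq> bcpm_V n \<and> is_hom A bcpm_E (bcpm_V n) bcpm_E f \<and>
     (\<forall>u\<in>A. fst (f u) = (fst u \<noteq> s))"

lemma sided_hom_insert:
  assumes f: "sided_hom n s A f" and v: "v \<in> bcpm_V n"
  shows "\<exists>c. sided_hom n s (insert v A) (f(v := (fst v \<noteq> s, c)))"
proof -
  define N where "N = {w \<in> A. bcpm_E v w}"
  have N_sub: "N \<subseteq> {w \<in> bcpm_V n. bcpm_E v w}"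
    using f by (auto simp: N_def sided_hom_def)
  have "finite N" using N_sub finite_bcpm_V by (auto intro: finite_subset)
  have "card ((snd \<circ> f) ` N) \<le> card N"
    using \<open>finite N\<close> by (rule card_image_le)
  also have "\<dots> < n"
    using card_mono[OF _ N_sub] card_bcpm_neighbours_less[OF v] finite_bcpm_V by fastforce
  finally have "\<not> {..<n} \<subseteq> (snd \<circ> f) ` N"
    using card_mono[of "(snd \<circ> f) ` N" "{..<n}"] \<open>finite N\<close> by auto
  then obtain c where c: "c < n" "c \<notin> (snd \<circ> f) ` N" by auto
  have fresh: "bcpm_E (fst v \<noteq> s, c) (f w)" "bcpm_E (f w) (fst v \<noteq> s, c)"
    if "w \<in> A" "bcpm_E v w" for w
    using f that c by (auto simp: N_def sided_hom_def bcpm_E_def)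
  show ?thesis
  proof (intro exI, unfold sided_hom_def is_hom_def, intro conjI ballI impI)
    fix u w assume u: "u \<in> insert v A" and w: "w \<in> insert v A" and e: "bcpm_E u w"
    have "u \<noteq> v \<or> w \<noteq> v" using e by (auto simp: bcpm_E_def)
    then show "bcpm_E ((f(v := (fst v \<noteq> s, c))) u) ((f(v := (fst v \<noteq> s, c))) w)"
      using u w e f fresh[of u] fresh[of w] bcpm_E_sym[OF e]
      by (auto simp: sided_hom_def is_hom_def)
  qed (use f v c in \<open>auto simp: sided_hom_def is_hom_def bcpm_V_def\<close>)
qed

lemma sided_hom_extend:
  assumes "finite F" "F \<subseteq> bcpm_V n" "sided_hom n s A f"
  shows "\<exists>g. sided_hom n s (A \<union> F) g \<and> (\<forall>x\<in>A. g x = f x)"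
  using assms
proof (induction F arbitrary: A f rule: finite_induct)
  case empty
  then show ?case by auto
next
  case (insert x F)
  show ?case
  proof (cases "x \<in> A")
    case True
    then show ?thesis using insert by (simp add: insert_absorb)
  next
    case False
    obtain c where "sided_hom n s (insert x A) (f(x := (fst x \<noteq> s, c)))"
      using sided_hom_insert insert.prems by blast
    then obtain g where "sided_hom n s (insert x A \<union> F) g"
      "\<forall>y\<in>insert x A. g y = (f(x := (fst x \<noteq> s, c))) y"
      using insert.IH insert.prems(1) by blast
    then show ?thesis using False by (metis Un_insert_left Un_insert_right fun_upd_other insertCI)
  qed
qed

lemma connected_hom_sided:
  assumes A: "A \<subseteq> bcpm_V n" "connected_on bcpm_E A"
    and f: "is_hom A bcpm_E (bcpm_V n) bcpm_E f"
  shows "\<exists>s. sided_hom n s A f"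
proof -
  obtain a where a: "a \<in> A" using A by (auto simp: connected_on_def)
  define s where "s = (fst a \<noteq> fst (f a))"
  have "fst (f u) = (fst u \<noteq> s)"
    if "(\<lambda>u v. u \<in> A \<and> v \<in> A \<and> bcpm_E u v)\<^sup>*\<^sup>* a u" for u
    using that
  proof (induction rule: rtranclp_induct)
    case base
    then show ?case by (auto simp: s_def)
  next
    case (step y z)
    then have "bcpm_E (f y) (f z)" using f by (auto simp: is_hom_def)
    then show ?case using step by (auto simp: bcpm_E_def)
  qed
  then show ?thesis
    using A f a by (auto simp: sided_hom_def connected_on_def)
qed

lemma C_HH_morphic_bcpm_self: "C_HH_morphic (bcpm_V n) bcpm_E (bcpm_V n) bcpm_E"
  unfolding C_HH_morphic_def
proof (intro allI impI, elim conjE)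
  fix A B f
  assume A: "A \<subseteq> bcpm_V n" "connected_on bcpm_E A"
    and f: "is_hom A bcpm_E B bcpm_E f" "B \<subseteq> bcpm_V n"
  then have "is_hom A bcpm_E (bcpm_V n) bcpm_E f" by (auto simp: is_hom_def)
  then obtain s where "sided_hom n s A f" using connected_hom_sided A by blast
  then obtain g where "sided_hom n s (A \<union> bcpm_V n) g" "\<forall>x\<in>A. g x = f x"
    using sided_hom_extend finite_bcpm_V by blast
  moreover have "A \<union> bcpm_V n = bcpm_V n" using A by auto
  ultimately show "\<exists>g. is_hom (bcpm_V n) bcpm_E (bcpm_V n) bcpm_E g \<and> (\<forall>x\<in>A. g x = f x)"
    by (auto simp: sided_hom_def)
qed

lemma exists_less_avoiding2:
  assumes "(m::nat) \<ge> 3"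
  shows "\<exists>k<m. k \<noteq> a \<and> k \<noteq> b"
  using assms
  by (intro exI[of _ "if a \<noteq> 0 \<and> b \<noteq> 0 then 0 else if a \<noteq> 1 \<and> b \<noteq> 1 then 1 else 2"]) auto

lemma connected_on_bcpm_V:
  assumes m: "m \<ge> 3"
  shows "connected_on bcpm_E (bcpm_V m)"
  unfolding connected_on_def
proof (intro conjI ballI)
  have "(True, 0) \<in> bcpm_V m" using m by (simp add: bcpm_V_def)
  then show "bcpm_V m \<noteq> {}" by blast
next
  fix u v assume u: "u \<in> bcpm_V m" and v: "v \<in> bcpm_V m"
  let ?R = "\<lambda>u v. u \<in> bcpm_V m \<and> v \<in> bcpm_V m \<and> bcpm_E u v"
  have same_side: "?R\<^sup>*\<^sup>* u' v'" if "u' \<in> bcpm_V m" "v' \<in> bcpm_V m" "fst u' = fst v'" for u' v'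
  proof -
    obtain k where "k < m" "k \<noteq> snd u'" "k \<noteq> snd v'" using exists_less_avoiding2[OF m] by blast
    then have "?R u' (\<not> fst u', k)" "?R (\<not> fst u', k) v'"
      using that by (auto simp: bcpm_V_def bcpm_E_def)
    then show ?thesis by (rule converse_rtranclp_into_rtranclp[OF _ r_into_rtranclp])
  qed
  show "?R\<^sup>*\<^sup>* u v"
  proof (cases "fst u = fst v")
    case False
    obtain k where k: "k < m" "k \<noteq> snd v" using exists_less_avoiding2[OF m] by blast
    have "?R\<^sup>*\<^sup>* u (fst u, k)" using same_side u k by (auto simp: bcpm_V_def)
    moreover have "?R (fst u, k) v" using v k False by (auto simp: bcpm_V_def bcpm_E_def)
    ultimately show ?thesis by (rule rtranclp.rtrancl_into_rtrancl)
  qed (use same_side u v in blast)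
qed

lemma not_C_HH_morphic_bcpm_smaller:
  assumes m: "m \<ge> 3" "m < n"
  shows "\<not> C_HH_morphic (bcpm_V n) bcpm_E (bcpm_V m) bcpm_E"
proof
  assume "C_HH_morphic (bcpm_V n) bcpm_E (bcpm_V m) bcpm_E"
  moreover have "is_hom (bcpm_V m) bcpm_E (bcpm_V m) bcpm_E id" by (auto simp: is_hom_def)
  moreover have "bcpm_V m \<subseteq> bcpm_V n" using m by (simp add: bcpm_V_mono)
  ultimately obtain g where g: "is_hom (bcpm_V n) bcpm_E (bcpm_V m) bcpm_E g"
    "\<forall>x\<in>bcpm_V m. g x = x"
    using connected_on_bcpm_V[OF m(1)] finite_bcpm_V[of m]
    unfolding C_HH_morphic_def by (metis id_apply image_id order.refl)
  define x where "x = (False, m)"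
  have x: "x \<in> bcpm_V n" using m by (auto simp: x_def bcpm_V_def)
  then have "g x \<in> bcpm_V m" using g(1) by (auto simp: is_hom_def)
  then have j: "snd (g x) < m" by (auto simp: bcpm_V_def)
  define y where "y = (True, snd (g x))"
  have y: "y \<in> bcpm_V m" "bcpm_E x y" using j by (auto simp: x_def y_def bcpm_V_def bcpm_E_def)
  then have "bcpm_E (g x) (g y)" using g(1) x \<open>bcpm_V m \<subseteq> bcpm_V n\<close> unfolding is_hom_def by blast
  then show False using g(2) y by (auto simp: y_def bcpm_E_def)
qed

lemma graph_iso_bcpm_iff: "graph_iso (bcpm_V n1) bcpm_E (bcpm_V n2) bcpm_E \<longleftrightarrow> n1 = n2"
proof
  assume "graph_iso (bcpm_V n1) bcpm_E (bcpm_V n2) bcpm_E"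
  then have "card (bcpm_V n1) = card (bcpm_V n2)"
    unfolding graph_iso_def by (metis bij_betw_same_card)
  then show "n1 = n2" by (simp add: card_bcpm_V)
qed (auto simp: graph_iso_def intro: exI[of _ id])

theorem lemma6p4:
  fixes n1 n2 :: nat
  assumes "n1 \<ge> 3" and "n2 \<ge> 3"
  shows "C_HH_symmetric (bcpm_V n1) bcpm_E (bcpm_V n2) bcpm_E
         \<longleftrightarrow> graph_iso (bcpm_V n1) bcpm_E (bcpm_V n2) bcpm_E"
proof -
  have "C_HH_symmetric (bcpm_V n1) bcpm_E (bcpm_V n2) bcpm_E \<longleftrightarrow> n1 = n2"
  proof
    assume sym: "C_HH_symmetric (bcpm_V n1) bcpm_E (bcpm_V n2) bcpm_E"
    show "n1 = n2"
    proof (rule linorder_cases[of n1 n2])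
      assume "n1 < n2"
      then show ?thesis using sym not_C_HH_morphic_bcpm_smaller assms(1) by (auto simp: C_HH_symmetric_def)
    next
      assume "n2 < n1"
      then show ?thesis using sym not_C_HH_morphic_bcpm_smaller assms(2) by (auto simp: C_HH_symmetric_def)
    qed
  qed (simp add: C_HH_symmetric_def C_HH_morphic_bcpm_self)
  then show ?thesis by (simp add: graph_iso_bcpm_iff)
qed

end
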